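(* Let $\mathbb{F}$ be an algebraically closed field and $V$ a $2m$-dimensional $\mathbb{F}$-vector space with a split nondegenerate quadratic form, with isometry group $O(V)$. Let $A\le O(V)$ be a finite abelian group of odd order not divisible by the characteristic of $\mathbb{F}$. (i) If some nontrivial linear character of $A$ occurs in $V$ with multiplicity at least $2$, then the centralizer $C_{O(V)}(A)$ contains a root group of $O(V)$. (ii) If the trivial character of $A$ occurs in $V$ with multiplicity at least $4$, then $C_{O(V)}(A)$ contains a root group of $O(V)$.
   Context: Let $B$ be the symmetric bilinear form associated with the quadratic form. A root group of $O(V)$ is a subgroup of the form $\{x\mapsto x+t(B(x,w)u-B(x,u)w): t\in\mathbb{F}\}$, where $u,w$ span a $2$-dimensional totally singular subspace of $V$. The multiplicity of a linear character $\lambda$ of $A$ in $V$ is the dimension of $\{v\in V: av=\lambda(a)v \text{ for all } a\in A\}$. *)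

theory Defs
  imports "HOL-Analysis.Analysis" "HOL-Computational_Algebra.Polynomial"
begin

definition polar :: "('a::field ^ 'n \<Rightarrow> 'a) \<Rightarrow> 'a ^ 'n \<Rightarrow> 'a ^ 'n \<Rightarrow> 'a" where
  "polar Q x y = Q (x + y) - Q x - Q y"

definition quadratic_form :: "('a::field ^ 'n \<Rightarrow> 'a) \<Rightarrow> bool" where
  "quadratic_form Q \<longleftrightarrow>
     (\<forall>c x. Q (c *s x) = c ^ 2 * Q x) \<and>
     (\<forall>x y z. polar Q (x + y) z = polar Q x z + polar Q y z) \<and>
     (\<forall>c x y. polar Q (c *s x) y = c * polar Q x y)"

definition nondegenerate_qf :: "('a::field ^ 'n \<Rightarrow> 'a) \<Rightarrow> bool" where
  "nondegenerate_qf Q \<longleftrightarrow> (\<forall>x. (\<forall>y. polar Q x y = 0) \<longrightarrow> x = 0)"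

definition totally_singular :: "('a::field ^ 'n \<Rightarrow> 'a) \<Rightarrow> ('a ^ 'n) set \<Rightarrow> bool" where
  "totally_singular Q W \<longleftrightarrow> vec.subspace W \<and> (\<forall>v\<in>W. Q v = 0)"

text \<open>split of Witt index m, where dim V = 2m\<close>
definition split_qf :: "('a::field ^ 'n \<Rightarrow> 'a) \<Rightarrow> nat \<Rightarrow> bool" where
  "split_qf Q m \<longleftrightarrow> (\<exists>W. totally_singular Q W \<and> vec.dim W = m)"

definition isometry_group :: "('a::field ^ 'n \<Rightarrow> 'a) \<Rightarrow> ('a ^ 'n \<Rightarrow> 'a ^ 'n) set" where
  "isometry_group Q = {g. Vector_Spaces.linear (*s) (*s) g \<and> bij g \<and> (\<forall>x. Q (g x) = Q x)}"

definition root_elt :: "('a::field ^ 'n \<Rightarrow> 'a) \<Rightarrow> 'a ^ 'n \<Rightarrow> 'a ^ 'n \<Rightarrow> 'a \<Rightarrow> 'a ^ 'n \<Rightarrow> 'a ^ 'n" where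
  "root_elt Q u w t = (\<lambda>x. x + t *s (polar Q x w *s u - polar Q x u *s w))"

definition root_group :: "('a::field ^ 'n \<Rightarrow> 'a) \<Rightarrow> 'a ^ 'n \<Rightarrow> 'a ^ 'n \<Rightarrow> ('a ^ 'n \<Rightarrow> 'a ^ 'n) set" where
  "root_group Q u w = range (root_elt Q u w)"

definition is_root_group :: "('a::field ^ 'n \<Rightarrow> 'a) \<Rightarrow> ('a ^ 'n \<Rightarrow> 'a ^ 'n) set \<Rightarrow> bool" where
  "is_root_group Q R \<longleftrightarrow> (\<exists>u w. vec.dim (vec.span {u, w}) = 2 \<and>
      totally_singular Q (vec.span {u, w}) \<and> R = root_group Q u w)"

definition centralizer :: "('a ^ 'n \<Rightarrow> 'a ^ 'n) set \<Rightarrow> ('a ^ 'n \<Rightarrow> 'a ^ 'n) set \<Rightarrow> ('a ^ 'n \<Rightarrow> 'a ^ 'n) set" where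
  "centralizer G A = {g \<in> G. \<forall>a\<in>A. g \<circ> a = a \<circ> g}"

definition finite_abelian_subgroup :: "('v \<Rightarrow> 'v) set \<Rightarrow> ('v \<Rightarrow> 'v) set \<Rightarrow> bool" where
  "finite_abelian_subgroup A G \<longleftrightarrow> A \<subseteq> G \<and> finite A \<and> id \<in> A \<and>
     (\<forall>f\<in>A. \<forall>g\<in>A. f \<circ> g \<in> A) \<and> (\<forall>f\<in>A. inv f \<in> A) \<and>
     (\<forall>f\<in>A. \<forall>g\<in>A. f \<circ> g = g \<circ> f)"

definition linear_character :: "('a::field ^ 'n \<Rightarrow> 'a ^ 'n) set \<Rightarrow> (('a ^ 'n \<Rightarrow> 'a ^ 'n) \<Rightarrow> 'a) \<Rightarrow> bool" where
  "linear_character A chi \<longleftrightarrow> (\<forall>a\<in>A. chi a \<noteq> 0) \<and> (\<forall>a\<in>A. \<forall>b\<in>A. chi (a \<circ> b) = chi a * chi b)"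

definition multiplicity_char :: "('a::field ^ 'n \<Rightarrow> 'a ^ 'n) set \<Rightarrow> (('a ^ 'n \<Rightarrow> 'a ^ 'n) \<Rightarrow> 'a) \<Rightarrow> nat" where
  "multiplicity_char A chi = vec.dim {v. \<forall>a\<in>A. a v = chi a *s v}"

end

theory Submission
  imports Defs
begin

text \<open>A root group built from a totally singular plane span {u, w} is centralized by every
  isometry that scales u by c and w by 1/c. For (i): as A has odd order, chi^2 \<noteq> 1, so the
  weight spaces of chi and 1/chi are totally singular; averaging a vector over A against chi
  gives a vector w of weight 1/chi pairing non-trivially with the chi-weight space (|A| is
  invertible in the field), and a chi-weight vector u orthogonal to w completes the plane.
  For (ii): over an algebraically closed field every plane contains a nonzero singular vector;
  take one, u, in the fixed space E, and another in E \<inter> u^\<bottom>, which has dimension at least 3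
  and hence contains a plane avoiding u. Neither the dimension nor the Witt index of V is
  needed.\<close>

definition weight_space :: "('a::field ^ 'n \<Rightarrow> 'a ^ 'n) set \<Rightarrow> (('a ^ 'n \<Rightarrow> 'a ^ 'n) \<Rightarrow> 'a) \<Rightarrow> ('a ^ 'n) set"
  where "weight_space A chi = {v. \<forall>a\<in>A. a v = chi a *s v}"

lemma multiplicity_char_eq_dim_weight_space:
  "multiplicity_char A chi = vec.dim (weight_space A chi)"
  unfolding multiplicity_char_def weight_space_def ..

lemma subspace_weight_space:
  assumes lin: "\<And>a. a \<in> A \<Longrightarrow> Vector_Spaces.linear (*s) (*s) a"
  shows "vec.subspace (weight_space A chi)"
  unfolding vec.subspace_def
proof (intro conjI ballI allI)
  show "0 \<in> weight_space A chi"
    using vec.linear_0[OF lin] by (simp add: weight_space_def)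
  fix x y c assume x: "x \<in> weight_space A chi" and y: "y \<in> weight_space A chi"
  show "x + y \<in> weight_space A chi"
    using x y vec.linear_add[OF lin] by (simp add: weight_space_def vector_add_ldistrib)
  have "a (c *s x) = chi a *s (c *s x)" if "a \<in> A" for a
  proof -
    have "a x = chi a *s x" using x that by (simp add: weight_space_def)
    then show ?thesis
      using vec.linear_scale[OF lin[OF that]] by (simp add: vector_smult_assoc mult.commute)
  qed
  then show "c *s x \<in> weight_space A chi" by (simp add: weight_space_def)
qed

lemma bij_betw_comp_left:
  assumes "finite A" "\<And>f g. f \<in> A \<Longrightarrow> g \<in> A \<Longrightarrow> f \<circ> g \<in> A" "a \<in> A" "inj a"
  shows "bij_betw ((\<circ>) a) A A"
proof -
  have "inj_on ((\<circ>) a) A"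
    using \<open>inj a\<close> by (auto intro!: inj_onI simp: fun_eq_iff inj_eq)
  moreover have "(\<circ>) a ` A \<subseteq> A" using assms(2,3) by blast
  ultimately show ?thesis
    using assms(1) by (simp add: bij_betw_def card_image card_subset_eq)
qed

lemma linear_character_pow_card:
  assumes "finite A" "\<And>f g. f \<in> A \<Longrightarrow> g \<in> A \<Longrightarrow> f \<circ> g \<in> A" "\<And>f. f \<in> A \<Longrightarrow> inj f"
    and chi: "linear_character A chi" and "a \<in> A"
  shows "chi a ^ card A = 1"
proof -
  have "prod chi A = (\<Prod>b\<in>A. chi (a \<circ> b))"
    by (rule prod.reindex_bij_betw[symmetric],
        rule bij_betw_comp_left[OF assms(1,2,5) assms(3)[OF \<open>a \<in> A\<close>]])
  also have "\<dots> = chi a ^ card A * prod chi A"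
    using chi \<open>a \<in> A\<close> by (simp add: linear_character_def prod.distrib)
  finally have "prod chi A = chi a ^ card A * prod chi A" .
  moreover have "prod chi A \<noteq> 0"
    using chi \<open>finite A\<close> by (simp add: linear_character_def prod_zero_iff)
  ultimately show ?thesis by simp
qed

lemma eq_one_if_square_and_odd_power_eq_one:
  fixes x :: "'a::monoid_mult"
  assumes "odd n" "x ^ n = 1" "x\<^sup>2 = 1"
  shows "x = 1"
proof -
  obtain k where "n = Suc (2 * k)" using \<open>odd n\<close> oddE by fastforce
  then show ?thesis using assms(2,3) by (simp add: power_mult)
qed

lemma not_in_span_of_eigenvector:
  assumes "Vector_Spaces.linear (*s) (*s) g" "g u = c *s u" "g w = d *s w" "w \<noteq> 0" "c \<noteq> d"
  shows "w \<notin> vec.span {u}"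
proof
  assume "w \<in> vec.span {u}"
  then obtain k where "w = k *s u" unfolding vec.span_singleton by auto
  then have "g w = c *s w"
    using assms(2) vec.linear_scale[OF assms(1)] by (simp add: vector_smult_assoc mult.commute)
  then have "c *s w = d *s w" using assms(3) by metis
  then show False using assms(4,5) vec.scale_cancel_right by blast
qed

lemma independent_pair:
  assumes "u \<noteq> 0" "w \<notin> vec.span {u}"
  shows "vec.independent {u, w}" "u \<noteq> w"
proof -
  show "u \<noteq> w" using assms(2) vec.span_base[of u "{u}"] by auto
  have "vec.independent {u}" using assms(1) by simp
  then have "vec.independent {w, u}" by (rule vec.independent_insertI[OF assms(2)])
  then show "vec.independent {u, w}" by (simp add: insert_commute)
qed

lemma obtain_independent_pair:
  assumes "2 \<le> vec.dim S"
  obtains x y where "x \<in> S" "y \<in> S" "x \<noteq> y" "vec.independent {x, y}"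
proof -
  obtain B where B: "B \<subseteq> S" "vec.independent B" "S \<subseteq> vec.span B" "card B = vec.dim S"
    by (rule vec.basis_exists)
  then have "2 \<le> card B" using assms by simp
  then obtain T where T: "T \<subseteq> B" "card T = 2" "finite T" by (rule obtain_subset_with_card_n)
  then obtain x y where "T = {x, y}" "x \<noteq> y" by (auto simp: card_2_iff)
  moreover have "vec.independent T" using vec.independent_mono[OF B(2) T(1)] .
  ultimately show ?thesis using that B(1) T(1) by blast
qed

lemma obtain_independent_pair_avoiding:
  assumes "u \<in> S" "u \<noteq> 0" "3 \<le> vec.dim S"
  obtains y z where "y \<in> S" "z \<in> S" "y \<noteq> z" "vec.independent {y, z}" "u \<notin> vec.span {y, z}"
proof -
  obtain B where B: "u \<in> B" "B \<subseteq> S" "vec.independent B" "S \<subseteq> vec.span B"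
    using vec.maximal_independent_subset_extend[of "{u}" S] assms(1,2) by auto
  have "card B = vec.dim S" by (rule vec.basis_card_eq_dim[OF B(2,4,3)])
  then have "2 \<le> card (B - {u})"
    using assms(3) B(1,3) vec.finiteI_independent by (simp add: card_Diff_singleton)
  then obtain T where "T \<subseteq> B - {u}" "card T = 2"
    using obtain_subset_with_card_n by metis
  then obtain y z where yz: "{y, z} \<subseteq> B - {u}" "y \<noteq> z" by (auto simp: card_2_iff)
  then have indep: "vec.independent (insert u {y, z})"
    using B(1,3) vec.independent_mono by (metis insert_subset Diff_subset subset_trans)
  have "u \<notin> {y, z}" using yz(1) by blast
  have "vec.independent {y, z} \<and> u \<notin> vec.span {y, z}"
    using indep unfolding vec.independent_insert[of u "{y, z}"] if_not_P[OF \<open>u \<notin> {y, z}\<close>] .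
  then show ?thesis using that yz B(2) by blast
qed

locale quadratic_space =
  fixes Q :: "'a::field ^ 'n \<Rightarrow> 'a"
  assumes quadratic_form: "quadratic_form Q"
begin

lemma Q_scale: "Q (c *s x) = c\<^sup>2 * Q x"
  using quadratic_form unfolding quadratic_form_def by blast

lemma polar_commute: "polar Q x y = polar Q y x"
  unfolding polar_def by (simp add: add.commute)

lemma polar_add_left: "polar Q (x + y) z = polar Q x z + polar Q y z"
  using quadratic_form unfolding quadratic_form_def by blast

lemma polar_scale_left: "polar Q (c *s x) y = c * polar Q x y"
  using quadratic_form unfolding quadratic_form_def by blast

lemma polar_add_right: "polar Q z (x + y) = polar Q z x + polar Q z y"
  using polar_add_left polar_commute by metis

lemma polar_scale_right: "polar Q y (c *s x) = c * polar Q y x"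
  using polar_scale_left polar_commute by metis

lemma polar_diff_left: "polar Q (x - z) y = polar Q x y - polar Q z y"
  using polar_add_left[of "x - z" z y] by simp

lemma polar_diff_right: "polar Q y (x - z) = polar Q y x - polar Q y z"
  using polar_diff_left polar_commute by metis

lemma polar_zero_right: "polar Q y 0 = 0"
  using polar_scale_right[of y 0 0] by simp

lemma polar_sum_left: "polar Q (sum f S) y = (\<Sum>s\<in>S. polar Q (f s) y)"
proof (induction S rule: infinite_finite_induct)
  case (infinite S)
  then show ?case using polar_scale_left[of 0 0 y] by simp
qed (use polar_scale_left[of 0 0 y] polar_add_left in auto)

lemma Q_add: "Q (x + y) = Q x + Q y + polar Q x y"
  unfolding polar_def by simp

lemma polar_self: "polar Q x x = 2 * Q x"
proof -
  have "x + x = (2::'a) *s x" by (simp add: vec_eq_iff)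
  then show ?thesis unfolding polar_def using Q_scale[of 2 x] by simp
qed

lemma Q_linear_combination: "Q (a *s x + b *s y) = a\<^sup>2 * Q x + b\<^sup>2 * Q y + a * b * polar Q x y"
  by (simp add: Q_add Q_scale polar_scale_left polar_scale_right)

lemma subspace_orthogonal: "vec.subspace {v. polar Q u v = 0}"
  unfolding vec.subspace_def by (simp add: polar_add_right polar_scale_right polar_zero_right)

lemma totally_singular_span_pair:
  assumes "Q u = 0" "Q w = 0" "polar Q u w = 0"
  shows "totally_singular Q (vec.span {u, w})"
proof -
  have "Q v = 0" if "v \<in> vec.span {u, w}" for v
  proof -
    from that obtain a b where "v - a *s u = b *s w"
      unfolding vec.span_insert vec.span_singleton by auto
    then have "v = a *s u + b *s w" by (simp add: algebra_simps)
    then show ?thesis using assms by (simp add: Q_linear_combination)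
  qed
  then show ?thesis unfolding totally_singular_def using vec.subspace_span by blast
qed

lemma isometry_linear: "g \<in> isometry_group Q \<Longrightarrow> Vector_Spaces.linear (*s) (*s) g"
  unfolding isometry_group_def by blast

lemma isometry_inj: "g \<in> isometry_group Q \<Longrightarrow> inj g"
  unfolding isometry_group_def by (blast intro: bij_is_inj)

lemma isometry_Q: "g \<in> isometry_group Q \<Longrightarrow> Q (g x) = Q x"
  unfolding isometry_group_def by blast

lemma isometry_polar: "g \<in> isometry_group Q \<Longrightarrow> polar Q (g x) (g y) = polar Q x y"
  unfolding polar_def using isometry_Q vec.linear_add[OF isometry_linear] by metis

lemma isometry_eigenvector_singular:
  assumes "g \<in> isometry_group Q" "g v = c *s v" "c\<^sup>2 \<noteq> 1"
  shows "Q v = 0"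
proof -
  have "Q v = c\<^sup>2 * Q v" using isometry_Q[OF assms(1), of v] assms(2) Q_scale by simp
  then have "(c\<^sup>2 - 1) * Q v = 0" by (simp add: left_diff_distrib)
  then show ?thesis using assms(3) by simp
qed

lemma polar_eigenvector:
  assumes "g \<in> isometry_group Q" "g w = c *s w" "c \<noteq> 0"
  shows "polar Q (g x) w = inverse c * polar Q x w"
proof -
  have "g (inverse c *s w) = w"
    using assms vec.linear_scale[OF isometry_linear[OF assms(1)]] by simp
  then have "polar Q (g x) w = polar Q x (inverse c *s w)"
    using isometry_polar[OF assms(1)] by metis
  then show ?thesis by (simp add: polar_scale_right)
qed

lemma root_elt_polar:
  assumes "Q u = 0" "Q w = 0" "polar Q u w = 0"
  shows "polar Q (root_elt Q u w t x) u = polar Q x u"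
    and "polar Q (root_elt Q u w t x) w = polar Q x w"
  using assms unfolding root_elt_def
  by (simp_all add: polar_add_left polar_diff_left polar_scale_left polar_self polar_commute[of w u])

lemma root_elt_isometry:
  assumes "Q u = 0" "Q w = 0" "polar Q u w = 0"
  shows "root_elt Q u w t \<in> isometry_group Q"
proof -
  have inverse: "root_elt Q u w (- s) \<circ> root_elt Q u w s = id" for s
    using root_elt_polar[OF assms] unfolding root_elt_def by (simp add: fun_eq_iff algebra_simps)
  have "root_elt Q u w t (x + y) = root_elt Q u w t x + root_elt Q u w t y" for x y
    by (simp add: root_elt_def polar_add_left vec_eq_iff algebra_simps)
  moreover have "root_elt Q u w t (c *s x) = c *s root_elt Q u w t x" for c x
    by (simp add: root_elt_def polar_scale_left vec_eq_iff algebra_simps)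
  ultimately have "Vector_Spaces.linear (*s) (*s) (root_elt Q u w t)"
    unfolding Vector_Spaces.linear_iff using vec.vector_space_axioms by blast
  moreover have "bij (root_elt Q u w t)"
    using o_bij inverse[of "- t"] inverse[of t] by (metis minus_minus)
  moreover have "Q (root_elt Q u w t x) = Q x" for x
  proof -
    define d where "d = polar Q x w *s u - polar Q x u *s w"
    have "Q d = 0"
      using Q_linear_combination[of "polar Q x w" u "- polar Q x u" w] assms
      by (simp add: d_def)
    moreover have "polar Q x d = 0"
      by (simp add: d_def polar_diff_right polar_scale_right polar_commute[of x])
    ultimately show ?thesis
      unfolding root_elt_def d_def[symmetric] by (simp add: Q_add Q_scale polar_scale_right)
  qed
  ultimately show ?thesis unfolding isometry_group_def by blast
qed

lemma root_elt_commute: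
  assumes g: "g \<in> isometry_group Q" and "c \<noteq> 0"
    and gu: "g u = c *s u" and gw: "g w = inverse c *s w"
  shows "g \<circ> root_elt Q u w t = root_elt Q u w t \<circ> g"
proof
  fix x
  have lin: "Vector_Spaces.linear (*s) (*s) g" by (rule isometry_linear[OF g])
  have "polar Q (g x) w = c * polar Q x w" and "polar Q (g x) u = inverse c * polar Q x u"
    using polar_eigenvector[OF g gw] polar_eigenvector[OF g gu] \<open>c \<noteq> 0\<close> by simp_all
  then have "root_elt Q u w t (g x)
      = g x + t *s ((c * polar Q x w) *s u - (inverse c * polar Q x u) *s w)"
    unfolding root_elt_def by simp
  moreover have "g (root_elt Q u w t x)
      = g x + t *s (polar Q x w *s (c *s u) - polar Q x u *s (inverse c *s w))"
    unfolding root_elt_def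
    by (simp only: vec.linear_add[OF lin] vec.linear_diff[OF lin] vec.linear_scale[OF lin] gu gw)
  ultimately show "(g \<circ> root_elt Q u w t) x = (root_elt Q u w t \<circ> g) x"
    by (simp add: vector_smult_assoc mult.commute)
qed

lemma root_group_in_centralizer:
  assumes "Q u = 0" "Q w = 0" "polar Q u w = 0" "vec.independent {u, w}" "u \<noteq> w"
    and "A \<subseteq> isometry_group Q"
    and scaling: "\<And>a. a \<in> A \<Longrightarrow> \<exists>c. c \<noteq> 0 \<and> a u = c *s u \<and> a w = inverse c *s w"
  shows "\<exists>R. is_root_group Q R \<and> R \<subseteq> centralizer (isometry_group Q) A"
proof (intro exI conjI)
  have "vec.dim (vec.span {u, w}) = 2"
    using vec.dim_span_eq_card_independent[OF assms(4)] assms(5) by simp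
  then show "is_root_group Q (root_group Q u w)"
    unfolding is_root_group_def using totally_singular_span_pair[OF assms(1-3)] by blast
  show "root_group Q u w \<subseteq> centralizer (isometry_group Q) A"
  proof
    fix r assume "r \<in> root_group Q u w"
    then obtain t where r: "r = root_elt Q u w t" unfolding root_group_def by auto
    have "a \<circ> r = r \<circ> a" if "a \<in> A" for a
      using scaling[OF that] root_elt_commute assms(6) that unfolding r by blast
    then show "r \<in> centralizer (isometry_group Q) A"
      unfolding centralizer_def using root_elt_isometry[OF assms(1-3)] r by auto
  qed
qed

lemma nonzero_orthogonal_in_span_pair:
  assumes "vec.independent {u1, u2}" "u1 \<noteq> u2"
  obtains u where "u \<in> vec.span {u1, u2}" "u \<noteq> 0" "polar Q u w = 0"
proof (cases "polar Q u1 w = 0")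
  case True
  moreover have "u1 \<noteq> 0" using assms(1) vec.dependent_zero by blast
  ultimately show ?thesis using that[of u1] vec.span_base[of u1 "{u1, u2}"] by simp
next
  case False
  define u where "u = polar Q u2 w *s u1 - polar Q u1 w *s u2"
  have "u \<noteq> 0"
  proof
    assume "u = 0"
    then have "polar Q u1 w *s u2 = polar Q u2 w *s u1" by (simp add: u_def)
    then have "u2 = (inverse (polar Q u1 w) * polar Q u2 w) *s u1"
      using False by (metis vector_smult_assoc vector_smult_lid left_inverse)
    then have "u2 \<in> vec.span {u1}" by (simp add: vec.span_singleton)
    then show False using assms vec.independent_insert[of u2 "{u1}"] by (auto simp: insert_commute)
  qed
  moreover have "u \<in> vec.span {u1, u2}"
    unfolding u_def by (intro vec.span_diff vec.span_scale vec.span_base) auto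
  moreover have "polar Q u w = 0"
    by (simp add: u_def polar_diff_left polar_scale_left)
  ultimately show ?thesis using that by blast
qed

lemma dim_le_dim_orthogonal_Suc:
  assumes "vec.subspace E"
  shows "vec.dim E \<le> Suc (vec.dim (E \<inter> {v. polar Q u v = 0}))"
proof -
  define S where "S = E \<inter> {v. polar Q u v = 0}"
  show ?thesis
  proof (cases "\<exists>q\<in>E. polar Q u q \<noteq> 0")
    case True
    then obtain q where q: "q \<in> E" "polar Q u q \<noteq> 0" by blast
    have "E \<subseteq> vec.span (insert q S)"
    proof
      fix p assume "p \<in> E"
      let ?k = "polar Q u p / polar Q u q"
      have "p - ?k *s q \<in> E"
        using assms \<open>p \<in> E\<close> q by (intro vec.subspace_diff vec.subspace_scale)
      moreover have "polar Q u (p - ?k *s q) = 0"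
        using q by (simp add: polar_diff_right polar_scale_right)
      ultimately have "p - ?k *s q \<in> S" unfolding S_def by simp
      then show "p \<in> vec.span (insert q S)"
        unfolding vec.span_insert using vec.span_base by blast
    qed
    then have "vec.dim E \<le> vec.dim (insert q S)" by (rule vec.dim_mono)
    also have "\<dots> \<le> Suc (vec.dim S)" by (simp add: vec.dim_insert)
    finally show ?thesis unfolding S_def .
  next
    case False
    then have "E \<inter> {v. polar Q u v = 0} = E" by blast
    then show ?thesis by simp
  qed
qed

lemma average_in_weight_space:
  assumes "A \<subseteq> isometry_group Q" "finite A" "\<And>f g. f \<in> A \<Longrightarrow> g \<in> A \<Longrightarrow> f \<circ> g \<in> A"
    and chi: "linear_character A chi"
  shows "(\<Sum>b\<in>A. chi b *s b x) \<in> weight_space A (\<lambda>a. inverse (chi a))"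
proof -
  have "a (\<Sum>b\<in>A. chi b *s b x) = inverse (chi a) *s (\<Sum>b\<in>A. chi b *s b x)" if a: "a \<in> A" for a
  proof -
    have lin: "Vector_Spaces.linear (*s) (*s) a" using a assms(1) isometry_linear by blast
    have "bij_betw ((\<circ>) a) A A"
      using assms(2,3) a assms(1) isometry_inj by (blast intro: bij_betw_comp_left)
    then have "(\<Sum>c\<in>A. (inverse (chi a) * chi c) *s c x)
        = (\<Sum>b\<in>A. (inverse (chi a) * chi (a \<circ> b)) *s (a \<circ> b) x)"
      by (rule sum.reindex_bij_betw[symmetric])
    also have "\<dots> = (\<Sum>b\<in>A. chi b *s a (b x))"
      using chi a by (intro sum.cong) (auto simp: linear_character_def)
    finally have "(\<Sum>b\<in>A. chi b *s a (b x)) = (\<Sum>c\<in>A. (inverse (chi a) * chi c) *s c x)" ..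
    then show ?thesis
      by (simp add: vec.linear_sum[OF lin] vec.linear_scale[OF lin] vec.scale_sum_right
          vector_smult_assoc)
  qed
  then show ?thesis by (simp add: weight_space_def)
qed

lemma polar_average:
  assumes "A \<subseteq> isometry_group Q" "linear_character A chi" "u \<in> weight_space A chi"
  shows "polar Q (\<Sum>b\<in>A. chi b *s b x) u = of_nat (card A) * polar Q x u"
proof -
  have "chi b * polar Q (b x) u = polar Q x u" if "b \<in> A" for b
    using polar_eigenvector[of b u "chi b" x] assms that
    by (auto simp: weight_space_def linear_character_def)
  then show ?thesis by (simp add: polar_sum_left polar_scale_left)
qed

lemma root_group_in_centralizer_of_character:
  assumes nondeg: "nondegenerate_qf Q"
    and A: "A \<subseteq> isometry_group Q" "finite A" "\<And>f g. f \<in> A \<Longrightarrow> g \<in> A \<Longrightarrow> f \<circ> g \<in> A"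
    and chi: "linear_character A chi" and "a0 \<in> A" "(chi a0)\<^sup>2 \<noteq> 1"
    and card: "of_nat (card A) \<noteq> (0::'a)"
    and dim: "2 \<le> vec.dim (weight_space A chi)"
  shows "\<exists>R. is_root_group Q R \<and> R \<subseteq> centralizer (isometry_group Q) A"
proof -
  let ?E = "weight_space A chi"
  have a0: "a0 \<in> isometry_group Q" using A(1) \<open>a0 \<in> A\<close> by blast
  have nz: "\<And>a. a \<in> A \<Longrightarrow> chi a \<noteq> 0" using chi by (simp add: linear_character_def)
  have subspace_E: "vec.subspace ?E"
    by (rule subspace_weight_space) (use A(1) isometry_linear in blast)
  obtain u1 u2 where u12: "u1 \<in> ?E" "u2 \<in> ?E" "u1 \<noteq> u2" "vec.independent {u1, u2}"
    using dim by (rule obtain_independent_pair)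
  then have "u1 \<noteq> 0" using vec.dependent_zero by blast
  then have "\<exists>x. polar Q u1 x \<noteq> 0" using nondeg unfolding nondegenerate_qf_def by blast
  then obtain x where "polar Q x u1 \<noteq> 0" using polar_commute by metis
  define w where "w = (\<Sum>b\<in>A. chi b *s b x)"
  have wE: "w \<in> weight_space A (\<lambda>a. inverse (chi a))"
    unfolding w_def using A chi by (rule average_in_weight_space)
  have "polar Q w u1 \<noteq> 0"
    using polar_average[OF A(1) chi u12(1)] card \<open>polar Q x u1 \<noteq> 0\<close> by (simp add: w_def)
  then have "w \<noteq> 0" using polar_zero_right[of u1] polar_commute[of 0 u1] by auto
  obtain u where u: "u \<in> vec.span {u1, u2}" "u \<noteq> 0" "polar Q u w = 0"
    using u12(4,3) by (rule nonzero_orthogonal_in_span_pair)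
  have "vec.span {u1, u2} \<subseteq> ?E" by (rule vec.span_minimal) (use u12 subspace_E in auto)
  then have uE: "u \<in> ?E" using u(1) by blast
  let ?L = "chi a0"
  have L2: "?L\<^sup>2 \<noteq> 1" "(inverse ?L)\<^sup>2 \<noteq> 1"
    using \<open>?L\<^sup>2 \<noteq> 1\<close> by (simp_all add: power_inverse)
  have "?L \<noteq> inverse ?L"
  proof
    assume "?L = inverse ?L"
    then have "?L\<^sup>2 = ?L * inverse ?L" by (simp add: power2_eq_square)
    then show False using L2(1) nz[OF \<open>a0 \<in> A\<close>] by simp
  qed
  have a0u: "a0 u = ?L *s u" and a0w: "a0 w = inverse ?L *s w"
    using uE wE \<open>a0 \<in> A\<close> by (simp_all add: weight_space_def)
  have "Q u = 0" by (rule isometry_eigenvector_singular[OF a0 a0u L2(1)])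
  moreover have "Q w = 0" by (rule isometry_eigenvector_singular[OF a0 a0w L2(2)])
  moreover have "w \<notin> vec.span {u}"
    by (rule not_in_span_of_eigenvector[OF isometry_linear[OF a0] a0u a0w \<open>w \<noteq> 0\<close> \<open>?L \<noteq> inverse ?L\<close>])
  then have "vec.independent {u, w}" "u \<noteq> w" by (rule independent_pair[OF \<open>u \<noteq> 0\<close>])+
  moreover have "\<exists>c. c \<noteq> 0 \<and> a u = c *s u \<and> a w = inverse c *s w" if "a \<in> A" for a
    using uE wE that nz[OF that] by (intro exI[of _ "chi a"]) (auto simp: weight_space_def)
  ultimately show ?thesis using root_group_in_centralizer[OF _ _ u(3) _ _ A(1)] by blast
qed

end

lemma exists_singular_in_span_pair:
  fixes Q :: "'a::alg_closed_field ^ 'n \<Rightarrow> 'a"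
  assumes "quadratic_space Q" and indep: "vec.independent {y, z}" "y \<noteq> z"
  obtains v where "v \<in> vec.span {y, z}" "v \<noteq> 0" "Q v = 0"
proof -
  interpret quadratic_space Q by fact
  have "z \<noteq> 0" using indep(1) vec.dependent_zero by blast
  show ?thesis
  proof (cases "Q z = 0")
    case True
    then show ?thesis using that \<open>z \<noteq> 0\<close> vec.span_base[of z "{y, z}"] by simp
  next
    case False
    let ?f = "\<lambda>k::nat. if k = 0 then Q y else if k = 1 then polar Q z y else Q z"
    obtain t where root: "(\<Sum>k\<le>2. ?f k * t ^ k) = 0" using alg_closed[of 2 ?f] False by auto
    have "(\<Sum>k\<le>2. ?f k * t ^ k) = Q y + polar Q z y * t + Q z * t\<^sup>2"
      by (simp add: numeral_2_eq_2 atMost_Suc)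
    moreover have "Q (t *s z + 1 *s y) = Q y + polar Q z y * t + Q z * t\<^sup>2"
      unfolding Q_linear_combination by (simp add: ac_simps)
    ultimately have "Q (t *s z + 1 *s y) = 0" using root by simp
    moreover have "t *s z + 1 *s y \<in> vec.span {y, z}"
      by (intro vec.span_add vec.span_scale vec.span_base) auto
    moreover have "t *s z + 1 *s y \<noteq> 0"
    proof
      assume "t *s z + 1 *s y = 0"
      then have "y = (- t) *s z" by (simp add: eq_neg_iff_add_eq_0 add.commute)
      moreover have "(- t) *s z \<in> vec.span {z}" by (intro vec.span_scale vec.span_base) simp
      ultimately have "y \<in> vec.span {z}" by (simp only:)
      then show False using indep vec.independent_insert[of y "{z}"] by simp
    qed
    ultimately show ?thesis using that by blast
  qed
qed

lemma root_group_in_centralizer_of_fixed_space: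
  fixes Q :: "'a::alg_closed_field ^ 'n \<Rightarrow> 'a"
  assumes "quadratic_space Q" "A \<subseteq> isometry_group Q"
    and dim: "4 \<le> vec.dim (weight_space A (\<lambda>_. 1))"
  shows "\<exists>R. is_root_group Q R \<and> R \<subseteq> centralizer (isometry_group Q) A"
proof -
  interpret quadratic_space Q by fact
  let ?E = "weight_space A (\<lambda>_. 1)"
  have subspace_E: "vec.subspace ?E"
    by (rule subspace_weight_space) (use assms(2) isometry_linear in blast)
  have "2 \<le> vec.dim ?E" using dim by simp
  then obtain u1 u2 where u12: "u1 \<in> ?E" "u2 \<in> ?E" "u1 \<noteq> u2" "vec.independent {u1, u2}"
    by (rule obtain_independent_pair)
  obtain u where u: "u \<in> vec.span {u1, u2}" "u \<noteq> 0" "Q u = 0"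
    using exists_singular_in_span_pair[OF assms(1) u12(4,3)] by blast
  have "vec.span {u1, u2} \<subseteq> ?E" by (rule vec.span_minimal) (use u12 subspace_E in auto)
  then have "u \<in> ?E" using u(1) by blast
  define S where "S = ?E \<inter> {v. polar Q u v = 0}"
  have "u \<in> S" using \<open>u \<in> ?E\<close> u(3) by (simp add: S_def polar_self)
  have "3 \<le> vec.dim S"
    using dim dim_le_dim_orthogonal_Suc[OF subspace_E, of u] by (simp add: S_def)
  with \<open>u \<in> S\<close> u(2) obtain y z where yz: "y \<in> S" "z \<in> S" "y \<noteq> z" "vec.independent {y, z}"
      "u \<notin> vec.span {y, z}"
    by (rule obtain_independent_pair_avoiding)
  obtain v where v: "v \<in> vec.span {y, z}" "v \<noteq> 0" "Q v = 0"
    using exists_singular_in_span_pair[OF assms(1) yz(4,3)] by blast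
  have "vec.subspace S"
    unfolding S_def by (rule vec.subspace_inter[OF subspace_E subspace_orthogonal])
  then have "vec.span {y, z} \<subseteq> S" using yz(1,2) by (intro vec.span_minimal) auto
  then have "v \<in> S" using v(1) by blast
  have "vec.span {v} \<subseteq> vec.span {y, z}" by (rule vec.span_minimal) (use v(1) vec.subspace_span in auto)
  then have "u \<notin> vec.span {v}" using yz(5) by blast
  have "polar Q v u = 0" using \<open>v \<in> S\<close> polar_commute by (simp add: S_def)
  moreover have "vec.independent {v, u}" "v \<noteq> u"
    using independent_pair[OF v(2) \<open>u \<notin> vec.span {v}\<close>] by blast+
  moreover have "\<exists>c. c \<noteq> 0 \<and> a v = c *s v \<and> a u = inverse c *s u" if "a \<in> A" for a
    using \<open>v \<in> S\<close> \<open>u \<in> ?E\<close> that by (intro exI[of _ 1]) (simp add: S_def weight_space_def)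
  ultimately show ?thesis by (rule root_group_in_centralizer[OF v(3) u(3) _ _ _ assms(2)])
qed

theorem lemmaD1:
  fixes Q :: "'a::alg_closed_field ^ 'n \<Rightarrow> 'a"
    and m :: nat
    and A :: "('a ^ 'n \<Rightarrow> 'a ^ 'n) set"
  assumes dimV: "CARD('n) = 2 * m"
    and qf: "quadratic_form Q"
    and nondeg: "nondegenerate_qf Q"
    and split: "split_qf Q m"
    and subgrp: "finite_abelian_subgroup A (isometry_group Q)"
    and odd_ord: "odd (card A)"
    and char_ndvd: "\<not> CHAR('a) dvd card A"
  shows "(\<forall>chi. linear_character A chi \<and> (\<exists>a\<in>A. chi a \<noteq> 1) \<and> multiplicity_char A chi \<ge> 2 \<longrightarrow>
            (\<exists>R. is_root_group Q R \<and> R \<subseteq> centralizer (isometry_group Q) A))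
       \<and> (multiplicity_char A (\<lambda>_. 1) \<ge> 4 \<longrightarrow>
            (\<exists>R. is_root_group Q R \<and> R \<subseteq> centralizer (isometry_group Q) A))"
proof -
  interpret quadratic_space Q by (rule quadratic_space.intro[OF qf])
  have A: "A \<subseteq> isometry_group Q" "finite A" "\<And>f g. f \<in> A \<Longrightarrow> g \<in> A \<Longrightarrow> f \<circ> g \<in> A"
    using subgrp unfolding finite_abelian_subgroup_def by blast+
  have "\<exists>R. is_root_group Q R \<and> R \<subseteq> centralizer (isometry_group Q) A"
    if chi: "linear_character A chi" and "a0 \<in> A" "chi a0 \<noteq> 1"
      and "2 \<le> multiplicity_char A chi" for chi a0
  proof -
    have "chi a0 ^ card A = 1"
      using linear_character_pow_card[OF A(2,3) _ chi \<open>a0 \<in> A\<close>] A(1) isometry_inj by blast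
    then have "(chi a0)\<^sup>2 \<noteq> 1"
      using eq_one_if_square_and_odd_power_eq_one odd_ord \<open>chi a0 \<noteq> 1\<close> by blast
    moreover have "of_nat (card A) \<noteq> (0::'a)"
      using char_ndvd by (simp add: of_nat_eq_0_iff_char_dvd)
    ultimately show ?thesis
      using root_group_in_centralizer_of_character[OF nondeg A chi \<open>a0 \<in> A\<close>]
        \<open>2 \<le> multiplicity_char A chi\<close> by (simp add: multiplicity_char_eq_dim_weight_space)
  qed
  moreover have "\<exists>R. is_root_group Q R \<and> R \<subseteq> centralizer (isometry_group Q) A"
    if "4 \<le> multiplicity_char A (\<lambda>_. 1)"
    using root_group_in_centralizer_of_fixed_space[OF quadratic_space_axioms A(1)] that
    by (simp add: multiplicity_char_eq_dim_weight_space)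
  ultimately show ?thesis by blast
qed

end
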